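(* Let $0<m\le L$, let $f:\mathbb R^d\to\mathbb R$ be $m$-strongly convex and $L$-smooth with minimizer $x^\star$, and fix $\bar b>0$ and initial data $x(0),\dot x(0)$ for $\ddot x+\bar b\sqrt m\dot x+\nabla f(x)=0$, with solution $x(t)$. For small $h>0$ run the iteration $x_{k+1}=x_k+\beta_h(x_k-x_{k-1})-\alpha\nabla f(y_k)$, $y_k=x_k+\beta_h(x_k-x_{k-1})$, with $\alpha=h^2$ and $\beta_h=1-\bar b\sqrt m h+o(h)$ as $h\downarrow0$, from starting points $x_{-1}=x_{-1}(h)$, $x_0=x_0(h)$ with $x_0\to x(0)$ and $(x_0-x_{-1})/h\to\dot x(0)$ as $h\downarrow0$. Let $\delta=\sqrt m h$, $b_h=(1-\beta_h)/\delta$, $r_h$ the unique real root of $\Xi_\delta(r,b_h)=0$, $\rho_h^2=1-r_h\delta$, and $$V_k^h=\rho_h^{-2k}\Big(f(x_k)-f(x^\star)+\tfrac m2\big\|(1-r_h\delta)\tfrac{x_k-x_{k-1}}{\delta}+r_h(x_k-x^\star)\big\|^2\Big).$$ Let $\bar r$ be the unique real root of $\bar\Xi(\bar r,\bar b)=0$, $\lambda=\sqrt m\bar r$, and $\bar V(t)=e^{\lambda t}\big(f(x(t))-f(x^\star)+\frac m2\|\dot x(t)/\sqrt m+\bar r(x(t)-x^\star)\|^2\big)$. Then $r_h\to\bar r$, and in the limit $h\downarrow0$, $k\to\infty$ with $kh\to t$: $x_k\to x(t)$, $(x_{k+1}-x_k)/h\to\dot x(t)$, and $V_k^h\to\bar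 V(t)$.
   Context: $\Xi_\delta(r,b)=(r+\delta)(1-\delta^2)b^2-2(1+r^2)(1-\delta^2)b+(r^3-3r^2\delta+3r-\delta)$ and $\bar\Xi(\bar r,\bar b)=\bar r\bar b^2-2(\bar r^2+1)\bar b+\bar r^3+3\bar r$. $f$ $m$-strongly convex: $f(y)\ge f(x)+\nabla f(x)^T(y-x)+\frac m2\|y-x\|^2$; $L$-smooth: $\nabla f$ is $L$-Lipschitz. *)

theory Defs
  imports "HOL-Analysis.Analysis"
begin

definition Xi :: "real \<Rightarrow> real \<Rightarrow> real \<Rightarrow> real" where
  "Xi \<delta> r b = (r + \<delta>) * (1 - \<delta>^2) * b^2 - 2 * (1 + r^2) * (1 - \<delta>^2) * b
                 + (r^3 - 3 * r^2 * \<delta> + 3 * r - \<delta>)"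

definition Xibar :: "real \<Rightarrow> real \<Rightarrow> real" where
  "Xibar r b = r * b^2 - 2 * (r^2 + 1) * b + r^3 + 3 * r"

text \<open>The iteration: nag g alpha beta x_{-1} x_0 k = (x_{k-1}, x_k), where
  y_k = x_k + beta (x_k - x_{k-1}) and x_{k+1} = y_k - alpha g(y_k).\<close>
fun nag :: "('a::real_vector \<Rightarrow> 'a) \<Rightarrow> real \<Rightarrow> real \<Rightarrow> 'a \<Rightarrow> 'a \<Rightarrow> nat \<Rightarrow> 'a \<times> 'a" where
  "nag g \<alpha> \<beta> xm1 x0 0 = (xm1, x0)"
| "nag g \<alpha> \<beta> xm1 x0 (Suc k) =
     (let (p, c) = nag g \<alpha> \<beta> xm1 x0 k; y = c + \<beta> *\<^sub>R (c - p) in (c, y - \<alpha> *\<^sub>R g y))"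

end

theory Submission
  imports Defs
begin

text \<open>
  Both cubics Xi delta (-) b and Xibar (-) bbar are monic in r, and Xibar has negative
  discriminant, so for small delta each has a single real root, which depends continuously on
  the coefficients; hence r_h tends to rbar.

  In the variables (x_k, (x_k - x_(k-1))/h) one step of the iteration is an Euler-type step of
  size h for the damped flow x'' + c x' + grad f (x) = 0 (c = bbar sqrt m), with local defect
  o(h) uniformly on compact time intervals. A discrete Gronwall inequality keeps the global error
  small up to any fixed time. The statement on V follows by continuity, since
  (1 - r_h delta)^(-k) = exp (k r_h delta (1 + o(1))) tends to exp (lambda t).
\<close>

definition cubic :: "real \<Rightarrow> real \<Rightarrow> real \<Rightarrow> real \<Rightarrow> real" where
  "cubic A B C r = r^3 + A*r^2 + B*r + C"

definition cubic_discr :: "real \<Rightarrow> real \<Rightarrow> real \<Rightarrow> real" where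
  "cubic_discr A B C = 18*A*B*C - 4*A^3*C + A^2*B^2 - 4*B^3 - 27*C^2"

lemma continuous_on_cubic: "continuous_on S (cubic A B C)"
  unfolding cubic_def by (intro continuous_intros)

lemma cubic_pos_right: "\<exists>R. \<forall>r\<ge>R. cubic A B C r > 0"
proof (intro exI allI impI)
  fix r :: real
  assume r: "1 + \<bar>A\<bar> + \<bar>B\<bar> + \<bar>C\<bar> \<le> r"
  then have r1: "1 \<le> r" by linarith
  have "r \<le> r^2"
    using mult_right_mono[OF r1, of r] r1 by (simp add: power2_eq_square)
  with r1 have r2: "r \<le> r^2" "1 \<le> r^2" by linarith+
  have "(1 + \<bar>A\<bar> + \<bar>B\<bar> + \<bar>C\<bar>) * r^2 \<le> r * r^2"
    using r by (intro mult_right_mono) auto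
  moreover have "- A*r^2 \<le> \<bar>A\<bar>*r^2"
    by (intro mult_right_mono) auto
  moreover have "- B*r \<le> \<bar>B\<bar>*r^2"
    using mult_mono[OF abs_ge_minus_self r2(1)] r1 by simp
  moreover have "- C \<le> \<bar>C\<bar>*r^2"
    using mult_mono[OF abs_ge_minus_self r2(2)] by simp
  ultimately show "cubic A B C r > 0"
    unfolding cubic_def using r2 by (simp add: power3_eq_cube power2_eq_square algebra_simps)
qed

lemma cubic_neg_left: "\<exists>R. \<forall>r\<le>R. cubic A B C r < 0"
proof -
  obtain R where R: "\<forall>r\<ge>R. cubic (-A) B (-C) r > 0"
    using cubic_pos_right by blast
  have "cubic A B C r = - cubic (-A) B (-C) (-r)" for r
    unfolding cubic_def by (simp add: power3_eq_cube power2_eq_square)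
  with R show ?thesis by (intro exI[of _ "-R"]) force
qed

lemma cubic_has_root: "\<exists>r. cubic A B C r = 0"
proof -
  obtain R1 where R1: "\<forall>r\<ge>R1. cubic A B C r > 0" using cubic_pos_right by blast
  obtain R2 where R2: "\<forall>r\<le>R2. cubic A B C r < 0" using cubic_neg_left by blast
  have "cubic A B C (min R1 R2) \<le> 0" "0 \<le> cubic A B C (max R1 R2)"
    using R1 R2 by (auto simp: less_imp_le)
  from IVT'[OF this _ continuous_on_cubic] show ?thesis
    by (meson max.cobounded1 min.cobounded1 order_trans)
qed

lemma cubic_root_unique:
  assumes "cubic_discr A B C < 0" and "cubic A B C r1 = 0" and "cubic A B C r2 = 0"
  shows "r1 = r2"
proof (rule ccontr)
  txt \<open>Two distinct real roots force a third one, and then the discriminant is a square.\<close>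
  assume "r1 \<noteq> r2"
  moreover have "(r1 - r2) * (r1^2 + r1*r2 + r2^2 + A*(r1+r2) + B) = cubic A B C r1 - cubic A B C r2"
    unfolding cubic_def by (simp add: algebra_simps power2_eq_square power3_eq_cube)
  ultimately have Q: "r1^2 + r1*r2 + r2^2 + A*(r1+r2) + B = 0"
    using assms(2,3) by simp
  define r3 where "r3 = -A - r1 - r2"
  have A: "A = -(r1 + r2 + r3)" unfolding r3_def by simp
  have B: "B = r1*r2 + r3*(r1 + r2)"
    using Q unfolding r3_def by (simp add: algebra_simps power2_eq_square)
  have C: "C = - r1*r2*r3"
    using assms(2) unfolding cubic_def A B by (simp add: algebra_simps power2_eq_square power3_eq_cube)
  have "cubic_discr A B C = ((r1 - r2)*(r1 - r3)*(r2 - r3))^2"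
    unfolding cubic_discr_def A B C by algebra
  with assms(1) show False by simp
qed

lemma cubic_sign_around_root:
  assumes discr: "cubic_discr A B C < 0" and root: "cubic A B C r0 = 0"
  shows "r0 < r \<Longrightarrow> cubic A B C r > 0" and "r < r0 \<Longrightarrow> cubic A B C r < 0"
proof -
  assume "r0 < r"
  show "cubic A B C r > 0"
  proof (rule ccontr)
    assume "\<not> cubic A B C r > 0"
    moreover obtain R where "\<forall>s\<ge>R. cubic A B C s > 0" using cubic_pos_right by blast
    then have "0 \<le> cubic A B C (max R r)" by (simp add: less_imp_le)
    ultimately obtain s where "r \<le> s" "cubic A B C s = 0"
      using IVT'[of "cubic A B C" r 0 "max R r"] continuous_on_cubic by force
    with cubic_root_unique[OF discr root] \<open>r0 < r\<close> show False by force
  qed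
next
  assume "r < r0"
  show "cubic A B C r < 0"
  proof (rule ccontr)
    assume "\<not> cubic A B C r < 0"
    moreover obtain R where "\<forall>s\<le>R. cubic A B C s < 0" using cubic_neg_left by blast
    then have "cubic A B C (min R r) \<le> 0" by (simp add: less_imp_le)
    ultimately obtain s where "s \<le> r" "cubic A B C s = 0"
      using IVT'[of "cubic A B C" "min R r" 0 r] continuous_on_cubic by force
    with cubic_root_unique[OF discr root] \<open>r < r0\<close> show False by force
  qed
qed

lemma cubic_The_root:
  assumes "cubic_discr A B C < 0"
  shows "cubic A B C (THE r. cubic A B C r = 0) = 0"
proof (rule theI')
  show "\<exists>!r. cubic A B C r = 0" using cubic_has_root cubic_root_unique[OF assms] by blast
qed

lemma tendsto_cubic_root:
  fixes A B C :: "'b \<Rightarrow> real"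
  assumes A: "(A \<longlongrightarrow> A0) F" and B: "(B \<longlongrightarrow> B0) F" and C: "(C \<longlongrightarrow> C0) F"
    and discr: "cubic_discr A0 B0 C0 < 0"
  shows "((\<lambda>z. THE r. cubic (A z) (B z) (C z) r = 0) \<longlongrightarrow> (THE r. cubic A0 B0 C0 r = 0)) F"
proof (rule tendstoI)
  fix \<epsilon> :: real
  assume "\<epsilon> > 0"
  define r0 where "r0 = (THE r. cubic A0 B0 C0 r = 0)"
  have root: "cubic A0 B0 C0 r0 = 0"
    unfolding r0_def using discr by (rule cubic_The_root)
  have lim: "((\<lambda>z. cubic (A z) (B z) (C z) r) \<longlongrightarrow> cubic A0 B0 C0 r) F" for r
    unfolding cubic_def by (intro tendsto_intros A B C)
  have "((\<lambda>z. cubic_discr (A z) (B z) (C z)) \<longlongrightarrow> cubic_discr A0 B0 C0) F"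
    unfolding cubic_discr_def by (intro tendsto_intros A B C)
  then have "eventually (\<lambda>z. cubic_discr (A z) (B z) (C z) < 0) F"
    using discr by (rule order_tendstoD(2))
  moreover have "eventually (\<lambda>z. cubic (A z) (B z) (C z) (r0 + \<epsilon>) > 0) F"
    using cubic_sign_around_root(1)[OF discr root] \<open>\<epsilon> > 0\<close> by (intro order_tendstoD(1)[OF lim]) simp
  moreover have "eventually (\<lambda>z. cubic (A z) (B z) (C z) (r0 - \<epsilon>) < 0) F"
    using cubic_sign_around_root(2)[OF discr root] \<open>\<epsilon> > 0\<close> by (intro order_tendstoD(2)[OF lim]) simp
  ultimately show "eventually (\<lambda>z. dist (THE r. cubic (A z) (B z) (C z) r = 0) r0 < \<epsilon>) F"
  proof eventually_elim
    case (elim z)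
    define r where "r = (THE r. cubic (A z) (B z) (C z) r = 0)"
    have "cubic (A z) (B z) (C z) r = 0"
      unfolding r_def using elim(1) by (rule cubic_The_root)
    with cubic_sign_around_root[OF elim(1)] elim(2,3) have "r0 - \<epsilon> < r" "r < r0 + \<epsilon>"
      by (metis not_less_iff_gr_or_eq)+
    then show ?case unfolding r_def[symmetric] dist_real_def by linarith
  qed
qed

lemma Xi_eq_cubic:
  "Xi \<delta> r b = cubic (-2*b*(1-\<delta>^2) - 3*\<delta>) (b^2*(1-\<delta>^2) + 3) (\<delta>*b^2*(1-\<delta>^2) - 2*b*(1-\<delta>^2) - \<delta>) r"
  unfolding Xi_def cubic_def by (simp add: algebra_simps power2_eq_square power3_eq_cube)

lemma Xibar_eq_cubic: "Xibar r b = cubic (-2*b) (b^2 + 3) (-2*b) r"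
  unfolding Xibar_def cubic_def by (simp add: algebra_simps power2_eq_square power3_eq_cube)

lemma cubic_discr_Xibar_neg: "cubic_discr (-2*b) (b^2 + 3) (-2*b) < 0"
proof -
  have "cubic_discr (-2*b) (b^2 + 3) (-2*b) = -4*((b^2 - 9/2)^2 + 27/4)"
    unfolding cubic_discr_def by (simp add: algebra_simps power2_eq_square power3_eq_cube)
  also have "\<dots> < 0"
  proof -
    have "(b^2 - 9/2)^2 + 27/4 > (0::real)" by (simp add: add_nonneg_pos)
    then show ?thesis by simp
  qed
  finally show ?thesis .
qed

lemma tendsto_Xi_root:
  assumes "(\<delta> \<longlongrightarrow> 0) F" and "(b \<longlongrightarrow> bbar) F"
  shows "((\<lambda>z. THE r. Xi (\<delta> z) r (b z) = 0) \<longlongrightarrow> (THE r. Xibar r bbar = 0)) F"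
proof -
  have "((\<lambda>z. -2*b z*(1 - \<delta> z^2) - 3*\<delta> z) \<longlongrightarrow> -2*bbar) F"
    and "((\<lambda>z. b z^2*(1 - \<delta> z^2) + 3) \<longlongrightarrow> bbar^2 + 3) F"
    and "((\<lambda>z. \<delta> z*b z^2*(1 - \<delta> z^2) - 2*b z*(1 - \<delta> z^2) - \<delta> z) \<longlongrightarrow> -2*bbar) F"
    by (auto intro!: tendsto_eq_intros assms)
  then have "((\<lambda>z. THE r. cubic (-2*b z*(1 - \<delta> z^2) - 3*\<delta> z) (b z^2*(1 - \<delta> z^2) + 3)
      (\<delta> z*b z^2*(1 - \<delta> z^2) - 2*b z*(1 - \<delta> z^2) - \<delta> z) r = 0)
      \<longlongrightarrow> (THE r. cubic (-2*bbar) (bbar^2 + 3) (-2*bbar) r = 0)) F"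
    using cubic_discr_Xibar_neg by (rule tendsto_cubic_root)
  then show ?thesis by (simp only: Xi_eq_cubic Xibar_eq_cubic)
qed

lemma tendsto_inverse_one_minus_power:
  fixes a :: "'b \<Rightarrow> real" and k :: "'b \<Rightarrow> nat"
  assumes a: "(a \<longlongrightarrow> 0) F" and ka: "((\<lambda>z. real (k z) * a z) \<longlongrightarrow> s) F"
  shows "((\<lambda>z. (1 / (1 - a z)) ^ k z) \<longlongrightarrow> exp s) F"
proof -
  txt \<open>Write (1 - a)^(-k) = exp (k a \<phi>(a)) with \<phi> continuous at 0 and \<phi>(0) = 1.\<close>
  define \<phi> :: "real \<Rightarrow> real" where "\<phi> b = (if b = 0 then 1 else - ln (1 - b) / b)" for b
  have "((\<lambda>b. ln (1 - b)) has_field_derivative -1) (at (0::real))"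
    by (auto intro!: derivative_eq_intros)
  then have "((\<lambda>b::real. ln (1 - b) / b) \<longlongrightarrow> -1) (at 0)"
    by (simp add: has_field_derivative_iff)
  from tendsto_minus[OF this] have "((\<lambda>b::real. - ln (1 - b) / b) \<longlongrightarrow> 1) (at 0)"
    by simp
  then have "(\<phi> \<longlongrightarrow> 1) (at 0)"
    by (rule Lim_transform_eventually) (simp add: \<phi>_def eventually_at_filter)
  then have "((\<lambda>z. \<phi> (a z)) \<longlongrightarrow> 1) F"
    using isCont_tendsto_compose[OF _ a, of \<phi>] by (simp add: isCont_def \<phi>_def)
  then have "((\<lambda>z. exp (real (k z) * a z * \<phi> (a z))) \<longlongrightarrow> exp (s * 1)) F"
    by (intro tendsto_intros ka)
  moreover have "eventually (\<lambda>z. exp (real (k z) * a z * \<phi> (a z)) = (1 / (1 - a z)) ^ k z) F"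
    using order_tendstoD(2)[OF a zero_less_one]
  proof eventually_elim
    case (elim z)
    then have "(1 / (1 - a z)) ^ k z = exp (real (k z) * ln (1 / (1 - a z)))"
      by (simp add: ln_realpow[symmetric])
    also have "ln (1 / (1 - a z)) = a z * \<phi> (a z)"
      using elim by (simp add: \<phi>_def ln_div)
    finally show ?case by (simp add: mult.assoc)
  qed
  ultimately show ?thesis by (simp add: tendsto_cong)
qed

lemma discrete_gronwall:
  fixes a :: "nat \<Rightarrow> real"
  assumes "0 \<le> C" "0 \<le> h" "0 \<le> \<eta>" "0 \<le> a 0" and "real k * h \<le> T"
    and step: "\<And>j. j < k \<Longrightarrow> a (Suc j) \<le> (1 + C*h) * a j + h*\<eta>"
  shows "a k \<le> exp (C*T) * (a 0 + T*\<eta>)"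
proof -
  have bound: "a j \<le> exp (C*h*real j) * (a 0 + real j*h*\<eta>)" if "j \<le> k" for j
    using that
  proof (induction j)
    case 0
    then show ?case by simp
  next
    case (Suc j)
    have "a (Suc j) \<le> (1 + C*h) * a j + h*\<eta>"
      using Suc.prems by (intro step) simp
    also have "\<dots> \<le> (1 + C*h) * (exp (C*h*real j) * (a 0 + real j*h*\<eta>)) + h*\<eta>"
      using Suc assms(1-3) by (intro add_right_mono mult_left_mono) auto
    also have "\<dots> \<le> exp (C*h) * (exp (C*h*real j) * (a 0 + real j*h*\<eta>)) + h*\<eta>"
      using assms(2-4) exp_ge_add_one_self[of "C*h"] by (intro add_right_mono mult_right_mono) auto
    also have "\<dots> \<le> exp (C*h) * (exp (C*h*real j) * (a 0 + real j*h*\<eta>)) + exp (C*h*real (Suc j)) * (h*\<eta>)"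
      using assms(1-3) mult_right_mono[of 1 "exp (C*h*real (Suc j))" "h*\<eta>"] by simp
    also have "\<dots> = exp (C*h*real (Suc j)) * (a 0 + real (Suc j)*h*\<eta>)"
      by (simp add: mult_exp_exp[symmetric] algebra_simps)
    finally show ?case .
  qed
  have "a k \<le> exp (C*h*real k) * (a 0 + real k*h*\<eta>)"
    using bound by simp
  also have "\<dots> \<le> exp (C*T) * (a 0 + T*\<eta>)"
  proof (rule mult_mono)
    show "exp (C*h*real k) \<le> exp (C*T)"
      using mult_left_mono[OF \<open>real k * h \<le> T\<close> \<open>0 \<le> C\<close>] by (simp add: ac_simps)
    show "a 0 + real k*h*\<eta> \<le> a 0 + T*\<eta>"
      using mult_right_mono[OF \<open>real k * h \<le> T\<close> \<open>0 \<le> \<eta>\<close>] by simp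
  qed (use assms(2-4) in auto)
  finally show ?thesis .
qed

lemma eventually_uniform_linearization:
  fixes F F' :: "real \<Rightarrow> 'a::real_normed_vector"
  assumes deriv: "\<And>t. 0 \<le> t \<Longrightarrow> (F has_vector_derivative F' t) (at t within {0..})"
    and cont: "continuous_on {0..} F'" and "0 < e"
  shows "eventually (\<lambda>h. \<forall>s\<in>{0..T}. norm (F (s+h) - F s - h *\<^sub>R F' s) \<le> h*e
           \<and> norm (F (s+h) - F s - h *\<^sub>R F' (s+h)) \<le> h*e) (at_right 0)"
proof -
  have "uniformly_continuous_on {0..T+1} F'"
    using cont by (intro compact_uniformly_continuous continuous_on_subset[OF cont]) auto
  then obtain d where "0 < d" and d: "\<And>t t'. t \<in> {0..T+1} \<Longrightarrow> t' \<in> {0..T+1} \<Longrightarrow>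
      dist t' t < d \<Longrightarrow> dist (F' t') (F' t) < e"
    unfolding uniformly_continuous_on_def using \<open>0 < e\<close> by metis
  have "eventually (\<lambda>h. 0 < h \<and> h < min d 1) (at_right 0)"
    by (rule eventually_at_rightI[of 0 "min d 1"]) (use \<open>0 < d\<close> in auto)
  then show ?thesis
  proof eventually_elim
    case (elim h)
    show ?case
    proof
      fix s assume s: "s \<in> {0..T}"
      have deriv_s: "\<And>t. t \<in> {s..s+h} \<Longrightarrow> (F has_vector_derivative F' t) (at t within {s..s+h})"
        using s elim by (intro has_vector_derivative_within_subset[OF deriv]) auto
      have seg: "closed_segment s (s+h) \<subseteq> {s..s+h}"
        using elim by (simp add: closed_segment_eq_real_ivl)
      have close: "norm (F' t - F' t') \<le> e" if "t \<in> {s..s+h}" "t' \<in> {s..s+h}" for t t'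
      proof -
        have "\<bar>t - t'\<bar> < d" using that elim by auto
        then show ?thesis using d[of t' t] that s elim by (auto simp: dist_norm)
      qed
      have ends: "s \<in> {s..s+h}" "s+h \<in> {s..s+h}"
        using elim by auto
      show "norm (F (s+h) - F s - h *\<^sub>R F' s) \<le> h*e
          \<and> norm (F (s+h) - F s - h *\<^sub>R F' (s+h)) \<le> h*e"
        using vector_differentiable_bound_linearization[OF deriv_s seg close ends(1)]
          vector_differentiable_bound_linearization[OF deriv_s seg close ends(2)] elim
        by (simp add: mult.commute)
    qed
  qed
qed

definition tracking_error :: "real \<Rightarrow> 'a::real_normed_vector \<times> 'a \<Rightarrow> 'a \<Rightarrow> 'a \<Rightarrow> real" where
  "tracking_error h pq y w = norm (snd pq - y) + norm ((1/h) *\<^sub>R (snd pq - fst pq) - w)"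

lemma tracking_error_nonneg: "0 \<le> tracking_error h pq y w"
  unfolding tracking_error_def by simp

lemma nag_extrapolation_error:
  assumes h: "0 < h" "h \<le> 1" and beta: "\<bar>\<beta>\<bar> \<le> 2" and V0: "norm V0 \<le> M"
  shows "norm (Q + \<beta> *\<^sub>R (Q - P) - X0) \<le> 3 * tracking_error h (P, Q) X0 V0 + 2*h*M"
proof -
  define w where "w = (1/h) *\<^sub>R (Q - P) - V0"
  define a where "a = tracking_error h (P, Q) X0 V0"
  have W: "norm w \<le> a" and E: "norm (Q - X0) \<le> a"
    unfolding a_def w_def tracking_error_def by simp_all
  have "norm (Q + \<beta> *\<^sub>R (Q - P) - X0) = norm ((Q - X0) + (\<beta>*h) *\<^sub>R (w + V0))"
    unfolding w_def using h by (simp add: algebra_simps)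
  also have "\<dots> \<le> a + \<bar>\<beta>\<bar>*h*(norm w + M)"
  proof -
    have "norm ((\<beta>*h) *\<^sub>R (w + V0)) \<le> \<bar>\<beta>\<bar>*h*(norm w + M)"
      using h V0 norm_triangle_ineq[of w V0] by (simp add: abs_mult mult_left_mono)
    then show ?thesis using E norm_triangle_ineq by (smt (verit))
  qed
  also have "\<dots> \<le> a + (2*a + 2*h*M)"
  proof -
    have "\<bar>\<beta>\<bar>*h \<le> 2" using beta h by (smt (verit) mult_left_le)
    moreover have "\<bar>\<beta>\<bar>*h*M \<le> 2*h*M"
      using beta h order_trans[OF norm_ge_zero V0] by (intro mult_right_mono) auto
    ultimately have "\<bar>\<beta>\<bar>*h*(norm w + M) \<le> 2*a + 2*h*M"
      using W mult_mono[of "\<bar>\<beta>\<bar>*h" 2 "norm w" a] by (simp add: distrib_left)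
    then show ?thesis by simp
  qed
  finally show ?thesis unfolding a_def by simp
qed

lemma nag_velocity_error:
  fixes g :: "'a::real_normed_vector \<Rightarrow> 'a"
  assumes h: "0 < h" "h \<le> 1" and K: "0 \<le> K" "K*h \<le> 1" and beta: "\<bar>\<beta>\<bar> \<le> 1 + K*h"
    and L: "0 \<le> L" and lip: "\<And>y z. norm (g y - g z) \<le> L * norm (y - z)"
    and V0: "norm V0 \<le> M"
    and q: "\<bar>\<beta> - (1 - c*h)\<bar> \<le> h*\<eta>3"
    and D1: "norm (V1 - V0 - h *\<^sub>R (- c *\<^sub>R V0 - g X0)) \<le> h*\<eta>1"
    and y: "y = Q + \<beta> *\<^sub>R (Q - P)"
  shows "norm ((1/h) *\<^sub>R (y - h^2 *\<^sub>R g y - Q) - V1)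
    \<le> norm ((1/h) *\<^sub>R (Q - P) - V0) + (K + 3*L)*h*tracking_error h (P, Q) X0 V0
       + h*(\<eta>3*M + 2*h*L*M + \<eta>1)"
proof -
  define w where "w = (1/h) *\<^sub>R (Q - P) - V0"
  define a where "a = tracking_error h (P, Q) X0 V0"
  have four: "norm (A + B - C - D) \<le> norm A + norm B + norm C + norm D" for A B C D :: 'a
    using norm_triangle_ineq4[of "A + B - C" D] norm_triangle_ineq4[of "A + B" C]
      norm_triangle_ineq[of A B] by linarith
  have eq: "(1/h) *\<^sub>R (y - h^2 *\<^sub>R g y - Q) - V1
      = \<beta> *\<^sub>R w + (\<beta> - (1 - c*h)) *\<^sub>R V0 - h *\<^sub>R (g y - g X0) - (V1 - V0 - h *\<^sub>R (- c *\<^sub>R V0 - g X0))"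
    using h unfolding y w_def by (simp add: algebra_simps power2_eq_square)
  have "norm ((1/h) *\<^sub>R (y - h^2 *\<^sub>R g y - Q) - V1)
      \<le> norm (\<beta> *\<^sub>R w) + norm ((\<beta> - (1 - c*h)) *\<^sub>R V0) + norm (h *\<^sub>R (g y - g X0))
         + norm (V1 - V0 - h *\<^sub>R (- c *\<^sub>R V0 - g X0))"
    unfolding eq by (rule four)
  also have "\<dots> \<le> \<bar>\<beta>\<bar> * norm w + \<bar>\<beta> - (1 - c*h)\<bar> * norm V0 + h * norm (g y - g X0) + h*\<eta>1"
    using h D1 by simp
  also have "\<bar>\<beta>\<bar> * norm w \<le> norm w + K*h*a"
  proof -
    have "\<bar>\<beta>\<bar> * norm w \<le> (1 + K*h) * norm w" using beta by (simp add: mult_right_mono)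
    moreover have "K*h * norm w \<le> K*h*a"
      using K h unfolding w_def a_def tracking_error_def by (simp add: mult_left_mono)
    ultimately show ?thesis by (simp add: distrib_right)
  qed
  also have "\<bar>\<beta> - (1 - c*h)\<bar> * norm V0 \<le> h*\<eta>3*M"
    using q V0 by (intro mult_mono) auto
  also have "h * norm (g y - g X0) \<le> h * (L * (3*a + 2*h*M))"
  proof -
    have "\<bar>\<beta>\<bar> \<le> 2" using beta K by linarith
    from nag_extrapolation_error[OF h this V0] have "norm (y - X0) \<le> 3*a + 2*h*M"
      unfolding y a_def .
    with lip[of y X0] L have "norm (g y - g X0) \<le> L * (3*a + 2*h*M)"
      by (meson mult_left_mono order_trans)
    with h show ?thesis by (simp add: mult_left_mono)
  qed
  finally show ?thesis unfolding w_def a_def by (simp add: algebra_simps)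
qed

lemma tracking_error_nag_step:
  fixes g :: "'a::real_normed_vector \<Rightarrow> 'a"
  assumes h: "0 < h" "h \<le> 1" and K: "0 \<le> K" "K*h \<le> 1" and beta: "\<bar>\<beta>\<bar> \<le> 1 + K*h"
    and L: "0 \<le> L" and lip: "\<And>y z. norm (g y - g z) \<le> L * norm (y - z)"
    and V0: "norm V0 \<le> M"
    and q: "\<bar>\<beta> - (1 - c*h)\<bar> \<le> h*\<eta>3"
    and D1: "norm (V1 - V0 - h *\<^sub>R (- c *\<^sub>R V0 - g X0)) \<le> h*\<eta>1"
    and D2: "norm (X1 - X0 - h *\<^sub>R V1) \<le> h*\<eta>2"
    and y: "y = Q + \<beta> *\<^sub>R (Q - P)"
  shows "tracking_error h (Q, y - h^2 *\<^sub>R g y) X1 V1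
    \<le> (1 + (1 + 2*K + 6*L)*h) * tracking_error h (P, Q) X0 V0 + h*(2*(\<eta>3*M + 2*h*L*M + \<eta>1) + \<eta>2)"
proof -
  define a where "a = tracking_error h (P, Q) X0 V0"
  define \<rho> where "\<rho> = \<eta>3*M + 2*h*L*M + \<eta>1"
  define u' where "u' = (1/h) *\<^sub>R (y - h^2 *\<^sub>R g y - Q)"
  have "0 \<le> M" "0 \<le> \<eta>1" "0 \<le> \<eta>3"
    using h V0 D1 q norm_ge_zero order_trans by (metis abs_ge_zero zero_le_mult_iff not_less)+
  then have "0 \<le> \<rho>" "0 \<le> a"
    using h L unfolding \<rho>_def a_def tracking_error_def by simp_all
  have vel: "norm (u' - V1) \<le> norm ((1/h) *\<^sub>R (Q - P) - V0) + (K + 3*L)*h*a + h*\<rho>"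
    unfolding u'_def a_def \<rho>_def using nag_velocity_error[OF h K beta L lip V0 q D1 y] .
  have "y - h^2 *\<^sub>R g y - X1 = (Q - X0) + h *\<^sub>R (u' - V1) - (X1 - X0 - h *\<^sub>R V1)"
    unfolding u'_def using h by (simp add: algebra_simps)
  then have pos: "norm (y - h^2 *\<^sub>R g y - X1) \<le> norm (Q - X0) + h * norm (u' - V1) + h*\<eta>2"
    using h D2 norm_triangle_ineq4 norm_triangle_ineq by (smt (verit) norm_scaleR abs_of_pos)
  have "h * norm (u' - V1) \<le> h * (norm ((1/h) *\<^sub>R (Q - P) - V0) + (K + 3*L)*h*a + h*\<rho>)"
    using vel h by (simp add: mult_left_mono)
  also have "\<dots> \<le> h*a + (K + 3*L)*h*a + h*\<rho>"
  proof -
    have "h * norm ((1/h) *\<^sub>R (Q - P) - V0) \<le> h*a"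
      using h unfolding a_def tracking_error_def by (simp add: mult_left_mono)
    moreover have "h*((K + 3*L)*h*a) \<le> (K + 3*L)*h*a" and "h*(h*\<rho>) \<le> h*\<rho>"
      using h K L \<open>0 \<le> a\<close> \<open>0 \<le> \<rho>\<close> by (simp_all add: mult_left_le_one_le)
    ultimately show ?thesis unfolding distrib_left by linarith
  qed
  finally have "norm (y - h^2 *\<^sub>R g y - X1) + norm (u' - V1)
      \<le> a + (1 + 2*K + 6*L)*h*a + h*(2*\<rho> + \<eta>2)"
    using pos vel unfolding a_def tracking_error_def by (simp add: algebra_simps)
  then show ?thesis
    unfolding tracking_error_def u'_def a_def \<rho>_def by (simp add: algebra_simps)
qed

lemma nag_Suc_eq:
  "nag g \<alpha> \<beta> p q (Suc k) =
    (let z = nag g \<alpha> \<beta> p q k; y = snd z + \<beta> *\<^sub>R (snd z - fst z) in (snd z, y - \<alpha> *\<^sub>R g y))"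
  by (simp add: Let_def split: prod.split)

lemma fst_nag_Suc: "fst (nag g \<alpha> \<beta> p q (Suc k)) = snd (nag g \<alpha> \<beta> p q k)"
  by (simp add: Let_def split: prod.split)

locale damped_gradient_flow =
  fixes g :: "'a::real_normed_vector \<Rightarrow> 'a" and L c :: real and x v :: "real \<Rightarrow> 'a"
  assumes L_nonneg: "0 \<le> L" and c_nonneg: "0 \<le> c"
    and lipschitz: "\<And>y z. norm (g y - g z) \<le> L * norm (y - z)"
    and x_deriv: "\<And>t. 0 \<le> t \<Longrightarrow> (x has_vector_derivative v t) (at t within {0..})"
    and v_deriv: "\<And>t. 0 \<le> t \<Longrightarrow> (v has_vector_derivative (- c *\<^sub>R v t - g (x t))) (at t within {0..})"
begin

lemma continuous_on_x: "continuous_on {0..} x"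
  unfolding continuous_on_eq_continuous_within
  using x_deriv has_vector_derivative_continuous by fastforce

lemma continuous_on_v: "continuous_on {0..} v"
  unfolding continuous_on_eq_continuous_within
  using v_deriv has_vector_derivative_continuous by fastforce

lemma continuous_on_acceleration: "continuous_on {0..} (\<lambda>t. - c *\<^sub>R v t - g (x t))"
proof -
  have "L-lipschitz_on UNIV g"
    by (rule lipschitz_onI) (auto simp: dist_norm lipschitz L_nonneg)
  then have "continuous_on UNIV g" by (rule lipschitz_on_continuous_on)
  then show ?thesis
    by (intro continuous_intros continuous_on_v continuous_on_compose2[OF _ continuous_on_x]) auto
qed

lemma bounded_v_on: "\<exists>M\<ge>0. \<forall>s\<in>{0..T}. norm (v s) \<le> M"
proof -
  have "compact (v ` {0..T})"
    by (intro compact_continuous_image continuous_on_subset[OF continuous_on_v]) auto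
  then show ?thesis
    using compact_imp_bounded bounded_pos by (metis imageI less_le_not_le)
qed

lemma eventually_flow_defects:
  assumes "0 < \<eta>"
  shows "eventually (\<lambda>h. \<forall>s\<in>{0..T}. norm (v (s+h) - v s - h *\<^sub>R (- c *\<^sub>R v s - g (x s))) \<le> h*\<eta>
           \<and> norm (x (s+h) - x s - h *\<^sub>R v (s+h)) \<le> h*\<eta>) (at_right 0)"
proof -
  have "eventually (\<lambda>h. \<forall>s\<in>{0..T}. norm (v (s+h) - v s - h *\<^sub>R (- c *\<^sub>R v s - g (x s))) \<le> h*\<eta>
      \<and> norm (v (s+h) - v s - h *\<^sub>R (- c *\<^sub>R v (s+h) - g (x (s+h)))) \<le> h*\<eta>) (at_right 0)"
    using assms by (intro eventually_uniform_linearization v_deriv continuous_on_acceleration)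
  moreover have "eventually (\<lambda>h. \<forall>s\<in>{0..T}. norm (x (s+h) - x s - h *\<^sub>R v s) \<le> h*\<eta>
      \<and> norm (x (s+h) - x s - h *\<^sub>R v (s+h)) \<le> h*\<eta>) (at_right 0)"
    using assms by (intro eventually_uniform_linearization x_deriv continuous_on_v)
  ultimately show ?thesis by eventually_elim blast
qed

end

locale nag_discretization = damped_gradient_flow +
  fixes beta :: "real \<Rightarrow> real" and xm1 x0 :: "real \<Rightarrow> 'a::real_normed_vector"
  assumes beta_asym: "((\<lambda>h. (beta h - (1 - c * h)) / h) \<longlongrightarrow> 0) (at_right 0)"
    and start_pos: "(x0 \<longlongrightarrow> x 0) (at_right 0)"
    and start_vel: "((\<lambda>h. (1 / h) *\<^sub>R (x0 h - xm1 h)) \<longlongrightarrow> v 0) (at_right 0)"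
begin

abbreviation iterate :: "real \<Rightarrow> nat \<Rightarrow> 'a \<times> 'a" where
  "iterate h \<equiv> nag g (h^2) (beta h) (xm1 h) (x0 h)"

abbreviation grid_error :: "real \<Rightarrow> nat \<Rightarrow> real" where
  "grid_error h k \<equiv> tracking_error h (iterate h k) (x (real k * h)) (v (real k * h))"

lemma eventually_beta_close:
  assumes "0 < \<eta>"
  shows "eventually (\<lambda>h. \<bar>beta h - (1 - c*h)\<bar> \<le> h*\<eta>) (at_right 0)"
proof -
  have "eventually (\<lambda>h. norm ((beta h - (1 - c * h)) / h) < \<eta>) (at_right 0)"
    using order_tendstoD(2)[OF tendsto_norm[OF beta_asym]] assms by simp
  with eventually_at_right_less[of 0] show ?thesis
  proof eventually_elim
    case (elim h)
    then show ?case by (simp add: abs_div pos_divide_less_eq mult.commute)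
  qed
qed

lemma tendsto_one_minus_beta_div: "((\<lambda>h. (1 - beta h) / h) \<longlongrightarrow> c) (at_right 0)"
proof -
  have "((\<lambda>h. c - (beta h - (1 - c * h)) / h) \<longlongrightarrow> c - 0) (at_right 0)"
    by (intro tendsto_diff tendsto_const beta_asym)
  moreover have "eventually (\<lambda>h. c - (beta h - (1 - c * h)) / h = (1 - beta h) / h) (at_right 0)"
    using eventually_at_right_less[of 0] by eventually_elim (simp add: field_simps)
  ultimately show ?thesis
    by (simp add: Lim_transform_eventually)
qed

lemma tendsto_rate_root:
  assumes "0 < d"
  shows "((\<lambda>h. THE r. Xi (d*h) r ((1 - beta h) / (d*h)) = 0) \<longlongrightarrow> (THE r. Xibar r (c/d) = 0)) (at_right 0)"
proof (rule tendsto_Xi_root)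
  show "((\<lambda>h. d*h) \<longlongrightarrow> 0) (at_right 0)"
    by (auto intro!: tendsto_eq_intros)
  have "((\<lambda>h. (1 - beta h) / h / d) \<longlongrightarrow> c/d) (at_right 0)"
    using assms by (intro tendsto_divide tendsto_one_minus_beta_div tendsto_const) auto
  then show "((\<lambda>h. (1 - beta h) / (d*h)) \<longlongrightarrow> c/d) (at_right 0)"
    by (simp add: mult.commute)
qed

lemma grid_error_step:
  assumes h: "0 < h" "(1 + c)*h \<le> 1"
    and beta: "\<bar>beta h - (1 - c*h)\<bar> \<le> h*\<eta>" "\<eta> \<le> 1"
    and V: "norm (v (real j * h)) \<le> M"
    and defect_v: "norm (v (real j * h + h) - v (real j * h)
                    - h *\<^sub>R (- c *\<^sub>R v (real j * h) - g (x (real j * h)))) \<le> h*\<eta>"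
    and defect_x: "norm (x (real j * h + h) - x (real j * h) - h *\<^sub>R v (real j * h + h)) \<le> h*\<eta>"
  shows "grid_error h (Suc j)
    \<le> (1 + (3 + 2*c + 6*L)*h) * grid_error h j + h*(2*(\<eta>*M + 2*h*L*M + \<eta>) + \<eta>)"
proof -
  have "0 \<le> c*h" using c_nonneg h by simp
  then have "h \<le> 1" using h by (simp add: algebra_simps)
  have "\<eta>*h \<le> h" using beta(2) h by simp
  with beta(1) \<open>0 \<le> c*h\<close> have beta_bound: "\<bar>beta h\<bar> \<le> 1 + (c + 1)*h"
    by (auto simp: algebra_simps abs_le_iff)
  obtain P Q where PQ: "iterate h j = (P, Q)" by fastforce
  have sh: "real (Suc j) * h = real j * h + h" by (simp add: algebra_simps)
  have "grid_error h (Suc j)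
      \<le> (1 + (1 + 2*(c + 1) + 6*L)*h) * grid_error h j + h*(2*(\<eta>*M + 2*h*L*M + \<eta>) + \<eta>)"
    unfolding nag_Suc_eq Let_def PQ fst_conv snd_conv sh
    by (rule tracking_error_nag_step[OF h(1) \<open>h \<le> 1\<close> _ _ beta_bound L_nonneg lipschitz V beta(1)
        defect_v defect_x refl]) (use c_nonneg h in \<open>simp_all add: algebra_simps\<close>)
  then show ?thesis by (simp add: algebra_simps)
qed

lemma eventually_grid_error_recursion:
  assumes "0 < \<sigma>"
  shows "eventually (\<lambda>h. \<forall>j. real j * h \<le> T \<longrightarrow>
    grid_error h (Suc j) \<le> (1 + (3 + 2*c + 6*L)*h) * grid_error h j + h*\<sigma>) (at_right 0)"
proof -
  obtain M where "0 \<le> M" and M: "\<forall>s\<in>{0..T}. norm (v s) \<le> M"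
    using bounded_v_on by blast
  define \<eta> where "\<eta> = min 1 (\<sigma>/(8*(M + 1)))"
  have "0 < \<eta>" "\<eta> \<le> 1"
    unfolding \<eta>_def using \<open>0 < \<sigma>\<close> \<open>0 \<le> M\<close> by auto
  have "\<eta>*(M + 1) \<le> \<sigma>/(8*(M + 1)) * (M + 1)"
    unfolding \<eta>_def using \<open>0 < \<sigma>\<close> \<open>0 \<le> M\<close> by (intro mult_mono) auto
  also have "\<dots> = \<sigma>/8" using \<open>0 \<le> M\<close> by (simp add: field_simps)
  finally have "\<eta>*M + \<eta> \<le> \<sigma>/8" by (simp add: algebra_simps)
  moreover have "0 \<le> \<eta>*M" using \<open>0 < \<eta>\<close> \<open>0 \<le> M\<close> by simp
  ultimately have "\<eta> \<le> \<sigma>/8" by linarith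
  have "((\<lambda>h. (1 + c)*h + 2*h*L*M) \<longlongrightarrow> 0) (at_right 0)"
    by (auto intro!: tendsto_eq_intros)
  then have "eventually (\<lambda>h. (1 + c)*h + 2*h*L*M < min 1 (\<sigma>/8)) (at_right 0)"
    using \<open>0 < \<sigma>\<close> by (intro order_tendstoD) auto
  with eventually_at_right_less[of 0] eventually_beta_close[OF \<open>0 < \<eta>\<close>]
    eventually_flow_defects[OF \<open>0 < \<eta>\<close>, of T]
  show ?thesis
  proof eventually_elim
    case (elim h)
    have "0 \<le> (1 + c)*h" "0 \<le> 2*h*L*M"
      using elim(1) c_nonneg L_nonneg \<open>0 \<le> M\<close> by simp_all
    with elim(4) have h: "(1 + c)*h \<le> 1" and hLM: "2*h*L*M \<le> \<sigma>/8"
      by linarith+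
    show ?case
    proof (intro allI impI)
      fix j assume "real j * h \<le> T"
      then have s: "real j * h \<in> {0..T}" using elim(1) by simp
      have "grid_error h (Suc j)
          \<le> (1 + (3 + 2*c + 6*L)*h) * grid_error h j + h*(2*(\<eta>*M + 2*h*L*M + \<eta>) + \<eta>)"
        using elim(1,2) h \<open>\<eta> \<le> 1\<close> M s elim(3)[rule_format, OF s] by (intro grid_error_step) auto
      also have "\<dots> \<le> (1 + (3 + 2*c + 6*L)*h) * grid_error h j + h*\<sigma>"
      proof -
        have "2*(\<eta>*M + 2*h*L*M + \<eta>) + \<eta> \<le> \<sigma>"
          using \<open>\<eta>*M + \<eta> \<le> \<sigma>/8\<close> \<open>\<eta> \<le> \<sigma>/8\<close> hLM \<open>0 < \<sigma>\<close> by argo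
        with elim(1) show ?thesis by (simp add: mult_left_mono)
      qed
      finally show "grid_error h (Suc j) \<le> (1 + (3 + 2*c + 6*L)*h) * grid_error h j + h*\<sigma>" .
    qed
  qed
qed

lemma eventually_grid_error_le:
  assumes "0 \<le> T" and "0 < \<epsilon>"
  shows "eventually (\<lambda>h. \<forall>k. real k * h \<le> T \<longrightarrow> grid_error h k \<le> \<epsilon>) (at_right 0)"
proof -
  define C where "C = 3 + 2*c + 6*L"
  define S where "S = exp (C*T)"
  define \<sigma> where "\<sigma> = \<epsilon> / (2*(S*(T + 1)))"
  have "0 \<le> C" "0 < S" unfolding C_def S_def using c_nonneg L_nonneg by simp_all
  then have "0 < S*(T + 1)" using assms by simp
  then have "0 < \<sigma>" and "S*((T + 1)*\<sigma>) = \<epsilon>/2"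
    unfolding \<sigma>_def using assms \<open>0 < S\<close> by simp_all
  moreover have "S*(T*\<sigma>) \<le> S*((T + 1)*\<sigma>)"
    using \<open>0 < S\<close> \<open>0 < \<sigma>\<close> by (intro mult_left_mono mult_right_mono) auto
  ultimately have "S*(T*\<sigma>) \<le> \<epsilon>/2" by simp
  have "((\<lambda>h. norm (x0 h - x 0) + norm ((1 / h) *\<^sub>R (x0 h - xm1 h) - v 0)) \<longlongrightarrow> 0 + 0) (at_right 0)"
    by (intro tendsto_add tendsto_norm_zero LIM_zero start_pos start_vel)
  then have "eventually (\<lambda>h. grid_error h 0 < \<epsilon>/(2*S)) (at_right 0)"
    using \<open>0 < \<epsilon>\<close> \<open>0 < S\<close> by (intro order_tendstoD(2)) (auto simp: tracking_error_def)
  with eventually_grid_error_recursion[OF \<open>0 < \<sigma>\<close>, of T] eventually_at_right_less[of 0]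
  show ?thesis
  proof eventually_elim
    case (elim h)
    show ?case
    proof (intro allI impI)
      fix k assume k: "real k * h \<le> T"
      have "grid_error h k \<le> S * (grid_error h 0 + T*\<sigma>)"
        unfolding S_def
      proof (rule discrete_gronwall[OF \<open>0 \<le> C\<close> _ _ tracking_error_nonneg k])
        fix j assume "j < k"
        then have "real j * h \<le> real k * h"
          using elim(2) by (intro mult_right_mono) auto
        with k elim(1) show "grid_error h (Suc j) \<le> (1 + C*h) * grid_error h j + h*\<sigma>"
          unfolding C_def by auto
      qed (use elim(2) \<open>0 < \<sigma>\<close> in auto)
      also have "\<dots> \<le> \<epsilon>"
        using elim(3) \<open>0 < S\<close> \<open>S*(T*\<sigma>) \<le> \<epsilon>/2\<close> by (simp add: field_simps)
      finally show "grid_error h k \<le> \<epsilon>" .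
    qed
  qed
qed

lemma grid_error_tendsto_zero:
  assumes "0 \<le> t" and hs: "\<And>n. 0 < hs n" "hs \<longlonglongrightarrow> 0"
    and kh: "(\<lambda>n. real (ks n) * hs n) \<longlonglongrightarrow> t"
  shows "(\<lambda>n. grid_error (hs n) (ks n)) \<longlonglongrightarrow> 0"
proof (rule order_tendstoI)
  fix \<epsilon> :: real assume "0 < \<epsilon>"
  have "filterlim hs (at_right 0) sequentially"
    using hs by (intro tendsto_imp_filterlim_at_right) auto
  moreover have "eventually (\<lambda>h. \<forall>k. real k * h \<le> t + 1 \<longrightarrow> grid_error h k \<le> \<epsilon>/2) (at_right 0)"
    using \<open>0 \<le> t\<close> \<open>0 < \<epsilon>\<close> by (intro eventually_grid_error_le) auto
  ultimately have "eventually (\<lambda>n. \<forall>k. real k * hs n \<le> t + 1 \<longrightarrow> grid_error (hs n) k \<le> \<epsilon>/2) sequentially"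
    by (rule eventually_compose_filterlim[rotated])
  moreover have "eventually (\<lambda>n. real (ks n) * hs n < t + 1) sequentially"
    using order_tendstoD(2)[OF kh] by simp
  ultimately show "eventually (\<lambda>n. grid_error (hs n) (ks n) < \<epsilon>) sequentially"
  proof eventually_elim
    case (elim n)
    then show ?case using elim(1)[rule_format, of "ks n"] \<open>0 < \<epsilon>\<close> by linarith
  qed
next
  fix a :: real assume "a < 0"
  then show "eventually (\<lambda>n. a < grid_error (hs n) (ks n)) sequentially"
    by (intro always_eventually allI less_le_trans[OF _ tracking_error_nonneg])
qed

lemma nag_tendsto_flow:
  assumes "0 \<le> t" and hs: "\<And>n. 0 < hs n" "hs \<longlonglongrightarrow> 0"
    and kh: "(\<lambda>n. real (ks n) * hs n) \<longlonglongrightarrow> t"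
  shows "(\<lambda>n. snd (iterate (hs n) (ks n))) \<longlonglongrightarrow> x t"
    and "(\<lambda>n. (1 / hs n) *\<^sub>R (snd (iterate (hs n) (ks n)) - fst (iterate (hs n) (ks n)))) \<longlonglongrightarrow> v t"
proof -
  note err = grid_error_tendsto_zero[OF assms]
  have grid: "eventually (\<lambda>n. real (ks n) * hs n \<in> {0..}) sequentially"
    using hs by (simp add: less_imp_le)
  show "(\<lambda>n. snd (iterate (hs n) (ks n))) \<longlonglongrightarrow> x t"
  proof (rule Lim_transform)
    show "(\<lambda>n. x (real (ks n) * hs n)) \<longlonglongrightarrow> x t"
      using continuous_on_tendsto_compose[OF continuous_on_x kh _ grid] \<open>0 \<le> t\<close> by simp
    show "(\<lambda>n. snd (iterate (hs n) (ks n)) - x (real (ks n) * hs n)) \<longlonglongrightarrow> 0"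
      by (rule Lim_null_comparison[OF _ err]) (simp add: tracking_error_def)
  qed
  show "(\<lambda>n. (1 / hs n) *\<^sub>R (snd (iterate (hs n) (ks n)) - fst (iterate (hs n) (ks n)))) \<longlonglongrightarrow> v t"
  proof (rule Lim_transform)
    show "(\<lambda>n. v (real (ks n) * hs n)) \<longlonglongrightarrow> v t"
      using continuous_on_tendsto_compose[OF continuous_on_v kh _ grid] \<open>0 \<le> t\<close> by simp
    show "(\<lambda>n. (1 / hs n) *\<^sub>R (snd (iterate (hs n) (ks n)) - fst (iterate (hs n) (ks n)))
        - v (real (ks n) * hs n)) \<longlonglongrightarrow> 0"
      by (rule Lim_null_comparison[OF _ err]) (simp add: tracking_error_def)
  qed
qed


lemma nag_forward_difference_tendsto:
  assumes "0 \<le> t" and hs: "\<And>n. 0 < hs n" "hs \<longlonglongrightarrow> 0"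
    and kh: "(\<lambda>n. real (ks n) * hs n) \<longlonglongrightarrow> t"
  shows "(\<lambda>n. (1 / hs n) *\<^sub>R (snd (iterate (hs n) (Suc (ks n))) - snd (iterate (hs n) (ks n)))) \<longlonglongrightarrow> v t"
proof -
  have "(\<lambda>n. real (Suc (ks n)) * hs n) \<longlonglongrightarrow> t"
    using tendsto_add[OF kh hs(2)] by (simp add: algebra_simps)
  from nag_tendsto_flow(2)[OF assms(1-3) this] show ?thesis
    unfolding fst_nag_Suc .
qed

end

lemma tendsto_discrete_lyapunov:
  fixes f :: "'a::real_normed_vector \<Rightarrow> real" and xs ds :: "nat \<Rightarrow> 'a"
  assumes "0 < m" and f: "isCont f X" and xs: "xs \<longlonglongrightarrow> X" and ds: "(\<lambda>n. (1 / hs n) *\<^sub>R ds n) \<longlonglongrightarrow> U"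
    and rs: "rs \<longlonglongrightarrow> r" and hs: "hs \<longlonglongrightarrow> 0" and kh: "(\<lambda>n. real (ks n) * hs n) \<longlonglongrightarrow> t"
  shows "(\<lambda>n. (1 / (1 - rs n * (sqrt m * hs n))) ^ ks n *
           (f (xs n) - f xstar + m / 2 * (norm (((1 - rs n * (sqrt m * hs n)) / (sqrt m * hs n)) *\<^sub>R ds n
              + rs n *\<^sub>R (xs n - xstar)))^2))
         \<longlonglongrightarrow> exp (sqrt m * r * t) * (f X - f xstar + m / 2 * (norm ((1 / sqrt m) *\<^sub>R U + r *\<^sub>R (X - xstar)))^2)"
proof -
  define a where "a n = rs n * (sqrt m * hs n)" for n
  have a: "a \<longlonglongrightarrow> 0"
    using tendsto_mult[OF rs tendsto_mult[OF tendsto_const hs]] unfolding a_def by simp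
  have "(\<lambda>n. sqrt m * rs n * (real (ks n) * hs n)) \<longlonglongrightarrow> sqrt m * r * t"
    by (intro tendsto_intros rs kh)
  moreover have "sqrt m * rs n * (real (ks n) * hs n) = real (ks n) * a n" for n
    unfolding a_def by (simp add: ac_simps)
  ultimately have ka: "(\<lambda>n. real (ks n) * a n) \<longlonglongrightarrow> sqrt m * r * t"
    by simp
  have scale: "((1 - a n) / (sqrt m * hs n)) *\<^sub>R ds n = ((1 - a n) / sqrt m) *\<^sub>R ((1 / hs n) *\<^sub>R ds n)" for n
    by simp
  have "(\<lambda>n. f (xs n) - f xstar + m / 2 * (norm (((1 - a n) / sqrt m) *\<^sub>R ((1 / hs n) *\<^sub>R ds n)
      + rs n *\<^sub>R (xs n - xstar)))^2)
      \<longlonglongrightarrow> f X - f xstar + m / 2 * (norm (((1 - 0) / sqrt m) *\<^sub>R U + r *\<^sub>R (X - xstar)))^2"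
    using \<open>0 < m\<close> by (intro tendsto_intros isCont_tendsto_compose[OF f xs] a ds rs xs) auto
  from tendsto_mult[OF tendsto_inverse_one_minus_power[OF a ka] this]
  show ?thesis unfolding a_def[symmetric] scale by simp
qed

theorem theorem7:
  fixes f :: "'a::euclidean_space \<Rightarrow> real" and gradf :: "'a \<Rightarrow> 'a"
    and m L bbar :: real and xstar xinit vinit :: 'a
    and x v :: "real \<Rightarrow> 'a"
    and beta :: "real \<Rightarrow> real" and xm1 x0 :: "real \<Rightarrow> 'a"
  assumes mpos: "0 < m" and mL: "m \<le> L"
    and grad: "\<And>z. (f has_derivative (\<lambda>u. gradf z \<bullet> u)) (at z)"
    and strong_convex: "\<And>z y. f y \<ge> f z + gradf z \<bullet> (y - z) + m / 2 * (norm (y - z))^2"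
    and smooth: "\<And>z y. norm (gradf z - gradf y) \<le> L * norm (z - y)"
    and minimizer: "\<And>y. f xstar \<le> f y"
    and bpos: "0 < bbar"
    and ode_x: "\<And>t. t \<ge> 0 \<Longrightarrow> (x has_vector_derivative v t) (at t within {0..})"
    and ode_v: "\<And>t. t \<ge> 0 \<Longrightarrow>
        (v has_vector_derivative (- (bbar * sqrt m) *\<^sub>R v t - gradf (x t))) (at t within {0..})"
    and init_x: "x 0 = xinit" and init_v: "v 0 = vinit"
    and beta_asym: "((\<lambda>h. (beta h - (1 - bbar * sqrt m * h)) / h) \<longlongrightarrow> 0) (at_right 0)"
    and start0: "(x0 \<longlongrightarrow> xinit) (at_right 0)"
    and start1: "((\<lambda>h. (1 / h) *\<^sub>R (x0 h - xm1 h)) \<longlongrightarrow> vinit) (at_right 0)"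
  shows
   "let X = (\<lambda>h k. nag gradf (h^2) (beta h) (xm1 h) (x0 h) k);
        rh = (\<lambda>h. THE r. Xi (sqrt m * h) r ((1 - beta h) / (sqrt m * h)) = 0);
        V = (\<lambda>h k. (1 / (1 - rh h * (sqrt m * h))) ^ k *
               (f (snd (X h k)) - f xstar
                + m / 2 * (norm (((1 - rh h * (sqrt m * h)) / (sqrt m * h)) *\<^sub>R
                                   (snd (X h k) - fst (X h k))
                                 + rh h *\<^sub>R (snd (X h k) - xstar)))^2));
        rbar = (THE r. Xibar r bbar = 0);
        lam = sqrt m * rbar;
        Vbar = (\<lambda>t. exp (lam * t) *
               (f (x t) - f xstar
                + m / 2 * (norm ((1 / sqrt m) *\<^sub>R v t + rbar *\<^sub>R (x t - xstar)))^2))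
    in (rh \<longlongrightarrow> rbar) (at_right 0) \<and>
       (\<forall>t \<ge> 0. \<forall>hs :: nat \<Rightarrow> real. \<forall>ks :: nat \<Rightarrow> nat.
          (\<forall>n. 0 < hs n) \<and> hs \<longlonglongrightarrow> 0 \<and> filterlim ks at_top sequentially
          \<and> (\<lambda>n. real (ks n) * hs n) \<longlonglongrightarrow> t \<longrightarrow>
            (\<lambda>n. snd (X (hs n) (ks n))) \<longlonglongrightarrow> x t
          \<and> (\<lambda>n. (1 / hs n) *\<^sub>R (snd (X (hs n) (Suc (ks n))) - snd (X (hs n) (ks n))))
               \<longlonglongrightarrow> v t
          \<and> (\<lambda>n. V (hs n) (ks n)) \<longlonglongrightarrow> Vbar t)"
proof -
  interpret nag_discretization gradf L "bbar * sqrt m" x v beta xm1 x0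
    by unfold_locales (use mpos mL bpos smooth ode_x ode_v beta_asym start0 start1 init_x init_v in auto)
  define rh where "rh h = (THE r. Xi (sqrt m * h) r ((1 - beta h) / (sqrt m * h)) = 0)" for h
  define rbar where "rbar = (THE r. Xibar r bbar = 0)"
  define V where "V h k = (1 / (1 - rh h * (sqrt m * h))) ^ k *
    (f (snd (iterate h k)) - f xstar + m / 2 * (norm (((1 - rh h * (sqrt m * h)) / (sqrt m * h)) *\<^sub>R
      (snd (iterate h k) - fst (iterate h k)) + rh h *\<^sub>R (snd (iterate h k) - xstar)))^2)" for h k
  define Vbar where "Vbar t = exp (sqrt m * rbar * t) *
    (f (x t) - f xstar + m / 2 * (norm ((1 / sqrt m) *\<^sub>R v t + rbar *\<^sub>R (x t - xstar)))^2)" for t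
  have rh_lim: "(rh \<longlongrightarrow> rbar) (at_right 0)"
    using tendsto_rate_root[of "sqrt m"] mpos unfolding rh_def rbar_def by simp
  show ?thesis
    unfolding Let_def rh_def[symmetric] rbar_def[symmetric] V_def[symmetric] Vbar_def[symmetric]
  proof (rule conjI[OF rh_lim], intro allI impI)
    fix t :: real and hs :: "nat \<Rightarrow> real" and ks :: "nat \<Rightarrow> nat"
    assume "0 \<le> t" and "(\<forall>n. 0 < hs n) \<and> hs \<longlonglongrightarrow> 0 \<and> filterlim ks at_top sequentially
      \<and> (\<lambda>n. real (ks n) * hs n) \<longlonglongrightarrow> t"
    then have grid: "0 \<le> t" "\<And>n. 0 < hs n" "hs \<longlonglongrightarrow> 0" "(\<lambda>n. real (ks n) * hs n) \<longlonglongrightarrow> t"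
      by auto
    have "filterlim hs (at_right 0) sequentially"
      using grid by (intro tendsto_imp_filterlim_at_right) auto
    with rh_lim have "(\<lambda>n. rh (hs n)) \<longlonglongrightarrow> rbar" by (rule filterlim_compose)
    from tendsto_discrete_lyapunov[OF mpos has_derivative_continuous[OF grad]
        nag_tendsto_flow[OF grid] this grid(3,4)]
    have "(\<lambda>n. V (hs n) (ks n)) \<longlonglongrightarrow> Vbar t"
      unfolding V_def Vbar_def .
    with nag_tendsto_flow(1)[OF grid] nag_forward_difference_tendsto[OF grid]
    show "(\<lambda>n. snd (iterate (hs n) (ks n))) \<longlonglongrightarrow> x t
      \<and> (\<lambda>n. (1 / hs n) *\<^sub>R (snd (iterate (hs n) (Suc (ks n))) - snd (iterate (hs n) (ks n)))) \<longlonglongrightarrow> v t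
      \<and> (\<lambda>n. V (hs n) (ks n)) \<longlonglongrightarrow> Vbar t"
      by blast
  qed
qed

end
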